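(* Let $k\ge1$. The Hamming weight enumerator of the linear simplex $\alpha$ code $\mathcal{S}_k^{\alpha}$ (of length $q^{sk}$) is $$W_{\mathcal{S}_k^{\alpha}}(X,Y)=\sum_{j=0}^{s-1}A_{w_j}X^{q^{sk}-w_j}Y^{w_j}+X^{q^{sk}},$$ where $w_j=q^{sk}-q^{s(k-1)+j}$ and $A_{w_j}=q^{k(s-j)}-q^{k((s-j)-1)}$.
   Context: Let $R$ be a finite commutative chain ring: a finite commutative ring with $1\neq0$ whose ideals form a single chain under inclusion. Its unique maximal ideal is principal, generated by some $\gamma$; let $s\ge1$ be the least integer with $\gamma^s=0$ (nilpotency index). The residue field $R/\langle\gamma\rangle$ is isomorphic to $\mathbb{F}_q$, $q$ a prime power. Fix a set $T=\{e_0,\dots,e_{q-1}\}\subseteq R$ of coset representatives of $R/\langle\gamma\rangle$ with $e_0=0$, $e_1=1$, totally ordered by $e_0<e_1<\dots<e_{q-1}$. Every $r\in R$ has a unique representation $r=\sum_{i=0}^{s-1}r_i\gamma^i$ with $r_i\in T$. Order $R$ by: $x>y$ iff $x_i>y_i$ in $T$ for the largest index $i$ with $x_i\neq y_i$ (where $x_i,y_i$ are the digits of $x,y$). List $R=\{\rho_0,\rho_1,\dots,\rho_{q^s-1}\}$ in increasing order (so $\rho_0=0,\rho_1=1$). For $a\in R$ and $m\ge1$, $\mathbf{a}^{(m)}$ denotes the constant vector $(a,\dots,a)\in R^m$. Define matrices $G_k^\alpha$ recursively: $G_1^\alpha=(\rho_0\ \rho_1\ \cdots\ \rho_{q^s-1})$,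 and for $k>1$, $G_k^\alpha$ is the $k\times q^{sk}$ matrix consisting of $q^s$ column blocks, where the $j$-th block ($j=0,\dots,q^s-1$) has first row $\boldsymbol{\rho_j}^{(q^{s(k-1)})}$ and, below it, a copy of $G_{k-1}^\alpha$. The linear simplex $\alpha$ code $\mathcal{S}_k^\alpha$ is the $R$-submodule of $R^{q^{sk}}$ generated by the rows of $G_k^\alpha$. The Hamming weight of $x\in R^n$ is the number of nonzero coordinates; the Hamming weight enumerator of a code $\mathcal{C}$ of length $n$ is $\sum_i A_iX^{n-i}Y^i$ where $A_i$ is the number of codewords of Hamming weight $i$. *)

theory Defs
  imports Complex_Main
begin

definition is_ideal :: "'a::comm_ring_1 set \<Rightarrow> bool" where
  "is_ideal I \<longleftrightarrow> 0 \<in> I \<and> (\<forall>x\<in>I. \<forall>y\<in>I. x + y \<in> I) \<and> (\<forall>r x. x \<in> I \<longrightarrow> r * x \<in> I)"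

definition maximal_ideal :: "'a::comm_ring_1 set \<Rightarrow> bool" where
  "maximal_ideal M \<longleftrightarrow> is_ideal M \<and> M \<noteq> UNIV \<and>
     (\<forall>J. is_ideal J \<and> M \<subseteq> J \<longrightarrow> J = M \<or> J = UNIV)"

definition pideal :: "'a::comm_ring_1 \<Rightarrow> 'a set" where
  "pideal g = {r * g | r. True}"

definition digits :: "'a::comm_ring_1 list \<Rightarrow> 'a \<Rightarrow> nat \<Rightarrow> 'a \<Rightarrow> nat \<Rightarrow> 'a" where
  "digits T g s r = (THE d. (\<forall>i<s. d i \<in> set T) \<and> (\<forall>i\<ge>s. d i = 0) \<and>
                            r = (\<Sum>i<s. d i * g ^ i))"

text \<open>Position of an element of T in the total order e_0 < e_1 < ... < e_{q-1}.\<close>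
definition tidx :: "'a list \<Rightarrow> 'a \<Rightarrow> nat" where
  "tidx T t = (THE n. n < length T \<and> T ! n = t)"

definition rless :: "'a::comm_ring_1 list \<Rightarrow> 'a \<Rightarrow> nat \<Rightarrow> 'a \<Rightarrow> 'a \<Rightarrow> bool" where
  "rless T g s x y \<longleftrightarrow> (\<exists>i<s. tidx T (digits T g s x i) < tidx T (digits T g s y i) \<and>
       (\<forall>j. i < j \<and> j < s \<longrightarrow> digits T g s x j = digits T g s y j))"

definition rho :: "'a::{comm_ring_1,finite} list \<Rightarrow> 'a \<Rightarrow> nat \<Rightarrow> nat \<Rightarrow> 'a" where
  "rho T g s j = (THE x. card {y. rless T g s y x} = j)"

text \<open>G_k^alpha as a function (row index, column index); N = q^s = |R|.
  Argument k is the number of rows; k = 0 is a dummy case.\<close>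
fun Gmat :: "(nat \<Rightarrow> 'a::zero) \<Rightarrow> nat \<Rightarrow> nat \<Rightarrow> nat \<Rightarrow> nat \<Rightarrow> 'a" where
  "Gmat r N 0 i c = 0"
| "Gmat r N (Suc 0) i c = r c"
| "Gmat r N (Suc (Suc k)) i c =
     (if i = 0 then r (c div N ^ Suc k) else Gmat r N (Suc k) (i - 1) (c mod N ^ Suc k))"

definition row_code :: "nat \<Rightarrow> nat \<Rightarrow> (nat \<Rightarrow> nat \<Rightarrow> 'a::comm_ring_1) \<Rightarrow> 'a list set" where
  "row_code k n M = {map (\<lambda>c. \<Sum>i<k. a i * M i c) [0..<n] | a. True}"

definition simplex_alpha_code :: "'a::{comm_ring_1,finite} list \<Rightarrow> 'a \<Rightarrow> nat \<Rightarrow> nat \<Rightarrow> 'a list set" where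
  "simplex_alpha_code T g s k =
     row_code k ((length T) ^ (s * k)) (Gmat (rho T g s) ((length T) ^ s) k)"

definition hamming_wt :: "'a::zero list \<Rightarrow> nat" where
  "hamming_wt x = length (filter (\<lambda>a. a \<noteq> 0) x)"

definition wt_count :: "'a::zero list set \<Rightarrow> nat \<Rightarrow> nat" where
  "wt_count C i = card {c \<in> C. hamming_wt c = i}"

definition weight_enumerator :: "'a::zero list set \<Rightarrow> nat \<Rightarrow> real \<Rightarrow> real \<Rightarrow> real" where
  "weight_enumerator C n X Y = (\<Sum>i\<le>n. real (wt_count C i) * X ^ (n - i) * Y ^ i)"

end

theory Submission
  imports Defs "HOL-Library.FuncSet"
begin

(* A combination a = (a_0, ..., a_(k-1)) of the rows of G_k^alpha has entry a . x at the column x,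
   and the columns of G_k^alpha run through R^k exactly once, so its weight is
   #{x in R^k. a . x ~= 0}.  In the chain ring R the ideal <gamma^j> has q^(s-j) elements, is the
   annihilator of gamma^(s-j), and its elements outside <gamma^(j+1)> are gamma^j times a unit.
   If j is largest with all a_i in <gamma^j>, then a_i0 = gamma^j u with u a unit for some i0;
   for fixed other coordinates, a . x = 0 says that u x_i0 lies in a translate of <gamma^(s-j)>,
   so a . x vanishes for q^(s(k-1)) q^j vectors x and the weight is q^(sk) - q^(s(k-1)+j).
   The number of such a is |<gamma^j>|^k - |<gamma^(j+1)>|^k. *)

lemma mem_pideal_iff: "x \<in> pideal g \<longleftrightarrow> (\<exists>y. x = y * g)"
  by (auto simp: pideal_def)

lemma pideal_is_ideal: "is_ideal (pideal g)"
proof -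
  have "0 = 0 * g" "a * g + b * g = (a + b) * g" "r * (a * g) = (r * a) * g" for a b r
    by (simp_all add: distrib_right mult.assoc)
  then show ?thesis unfolding is_ideal_def Ball_def mem_pideal_iff by blast
qed

lemma card_unit_affine_preimage:
  fixes u v b :: "'a::{comm_ring_1,finite}"
  assumes "u * v = 1"
  shows "card {t. u * t + b \<in> A} = card A"
proof -
  let ?f = "\<lambda>t. u * t + b"
  have "inj ?f"
  proof (rule injI)
    fix t t' assume "?f t = ?f t'"
    then have "v * (u * t) = v * (u * t')" by simp
    then show "t = t'" using assms by (simp add: mult.assoc[symmetric] mult.commute[of v u])
  qed
  moreover have "?f (v * (w - b)) = w" for w
    using assms by (simp add: mult.assoc[symmetric])
  then have "A \<subseteq> range ?f" by (metis rangeI subsetI)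
  ultimately have "card (?f -` A) = card A" by (rule card_vimage_inj)
  then show ?thesis by (simp add: vimage_def)
qed

lemma card_funs_fixed_outside:
  "card {d::nat\<Rightarrow>'b. (\<forall>i<n. d i \<in> A i) \<and> (\<forall>i\<ge>n. d i = z)} = (\<Prod>i<n. card (A i))"
proof -
  define extend where "extend f i = (if i < n then f i else z)" for f :: "nat \<Rightarrow> 'b" and i
  have "inj_on extend (PiE {..<n} A)"
  proof
    fix f f' assume f: "f \<in> PiE {..<n} A" "f' \<in> PiE {..<n} A" and eq: "extend f = extend f'"
    have "f i = f' i" if "i < n" for i
      using that fun_cong[OF eq, of i] by (simp add: extend_def)
    then show "f = f'" by (intro PiE_ext[OF f]) auto
  qed
  moreover have "{d. (\<forall>i<n. d i \<in> A i) \<and> (\<forall>i\<ge>n. d i = z)} = extend ` PiE {..<n} A"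
  proof (intro equalityI subsetI)
    fix d assume d: "d \<in> {d. (\<forall>i<n. d i \<in> A i) \<and> (\<forall>i\<ge>n. d i = z)}"
    then have "d = extend (restrict d {..<n})" by (auto simp: extend_def fun_eq_iff)
    moreover have "restrict d {..<n} \<in> PiE {..<n} A" using d by auto
    ultimately show "d \<in> extend ` PiE {..<n} A" by blast
  next
    fix d assume "d \<in> extend ` PiE {..<n} A"
    then obtain f where "f \<in> PiE {..<n} A" "d = extend f" by blast
    then show "d \<in> {d. (\<forall>i<n. d i \<in> A i) \<and> (\<forall>i\<ge>n. d i = z)}"
      by (auto simp: extend_def PiE_iff)
  qed
  ultimately show ?thesis by (simp add: card_image card_PiE)
qed

lemma card_PiE_UNIV_filter:
  fixes P :: "('i \<Rightarrow> 'a::finite) \<Rightarrow> bool"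
  assumes "finite K" "i \<in> K"
    and fiber: "\<And>g. g \<in> PiE (K - {i}) (\<lambda>_. UNIV) \<Longrightarrow> card {t. P (g(i := t))} = c"
  shows "card {x \<in> PiE K (\<lambda>_. UNIV). P x} = card (UNIV :: 'a set) ^ (card K - 1) * c"
proof -
  let ?G = "PiE (K - {i}) (\<lambda>_. UNIV :: 'a set)"
  let ?S = "SIGMA g:?G. {t. P (g(i := t))}"
  let ?upd = "\<lambda>(g, t). g(i := t)"
  have "inj_on ?upd ?S"
  proof (rule inj_onI, clarsimp)
    fix g t g' t' assume g: "g \<in> ?G" "g' \<in> ?G" and eq: "g(i := t) = g'(i := t')"
    have "g l = g' l" for l
      using fun_cong[OF eq, of l] PiE_arb[OF g(1), of i] PiE_arb[OF g(2), of i]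
      by (cases "l = i") auto
    then show "g = g' \<and> t = t'" using fun_cong[OF eq, of i] by auto
  qed
  moreover have "{x \<in> PiE K (\<lambda>_. UNIV). P x} = ?upd ` ?S"
  proof -
    have PiE_K: "PiE K (\<lambda>_. UNIV :: 'a set) = (\<lambda>(t, g). g(i := t)) ` (UNIV \<times> ?G)"
      using PiE_insert_eq[of i "K - {i}" "\<lambda>_. UNIV :: 'a set"] assms(2)
      by (simp add: insert_absorb)
    show ?thesis
    proof (intro equalityI subsetI)
      fix x assume "x \<in> {x \<in> PiE K (\<lambda>_. UNIV). P x}"
      then obtain g t where "g \<in> ?G" "x = g(i := t)" "P x" unfolding PiE_K by auto
      then show "x \<in> ?upd ` ?S" by (intro image_eqI[of _ _ "(g, t)"]) auto
    next
      fix x assume "x \<in> ?upd ` ?S"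
      then obtain g t where "g \<in> ?G" "x = g(i := t)" "P x" by auto
      then show "x \<in> {x \<in> PiE K (\<lambda>_. UNIV). P x}"
        unfolding PiE_K by (auto intro: image_eqI[of _ _ "(t, g)"])
    qed
  qed
  moreover have "card ?S = (\<Sum>g\<in>?G. c)"
    using assms(1) by (simp add: card_SigmaI finite_PiE fiber)
  ultimately show ?thesis
    using assms(1,2) by (simp add: card_image card_PiE)
qed

lemma bij_betw_rank:
  fixes lt :: "'b::finite \<Rightarrow> 'b \<Rightarrow> bool"
  assumes irrefl: "\<And>x. \<not> lt x x" and trans: "\<And>x y z. lt x y \<Longrightarrow> lt y z \<Longrightarrow> lt x z"
    and total: "\<And>x y. x \<noteq> y \<Longrightarrow> lt x y \<or> lt y x"
  shows "bij_betw (\<lambda>x. card {y. lt y x}) UNIV {..<card (UNIV :: 'b set)}"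
proof -
  let ?rank = "\<lambda>x. card {y. lt y x}"
  have less: "?rank x < ?rank y" if "lt x y" for x y
  proof -
    have "{z. lt z x} \<subset> {z. lt z y}" using that trans irrefl by blast
    then show ?thesis by (simp add: psubset_card_mono)
  qed
  have "inj ?rank"
    by (rule injI) (metis less total less_irrefl)
  moreover have "?rank x < card (UNIV :: 'b set)" for x
    using irrefl by (intro psubset_card_mono) auto
  then have "range ?rank \<subseteq> {..<card (UNIV :: 'b set)}" by auto
  ultimately show ?thesis
    by (simp add: bij_betw_def card_image card_subset_eq)
qed

lemma mod_power_div_mod:
  fixes N :: nat
  assumes "e < a" "0 < N"
  shows "(c mod N ^ a) div N ^ e mod N = c div N ^ e mod N"
proof -
  have "N ^ a = N ^ e * N ^ (a - e)" using assms by (simp add: power_add[symmetric])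
  then have "(c mod N ^ a) div N ^ e = c div N ^ e mod N ^ (a - e)"
    using assms by (simp add: mod_mult2_eq)
  moreover have "N dvd N ^ (a - e)" using assms by simp
  ultimately show ?thesis by (simp add: mod_mod_cancel)
qed

lemma base_digits_inj:
  fixes N :: nat
  assumes "0 < N" "c < N ^ k" "c' < N ^ k" "\<forall>m<k. c div N ^ m mod N = c' div N ^ m mod N"
  shows "c = c'"
  using assms(2-)
proof (induction k arbitrary: c c')
  case (Suc k)
  have "c mod N = c' mod N" using Suc.prems(3)[rule_format, of 0] by simp
  moreover have "c div N = c' div N"
  proof (rule Suc.IH)
    show "c div N < N ^ k" "c' div N < N ^ k" using Suc.prems assms(1)
      by (simp_all add: div_less_iff_less_mult mult.commute)
    show "\<forall>m<k. c div N div N ^ m mod N = c' div N div N ^ m mod N"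
      using Suc.prems(3) by (simp add: div_mult2_eq[symmetric] power_Suc[symmetric] del: power_Suc)
  qed
  ultimately show ?case by (metis div_mult_mod_eq)
qed simp

lemma Gmat_eq_base_digit:
  "0 < N \<Longrightarrow> i < k \<Longrightarrow> c < N ^ k \<Longrightarrow> Gmat r N k i c = r (c div N ^ (k - 1 - i) mod N)"
proof (induction r N k i c rule: Gmat.induct)
  case (3 r N k i c)
  show ?case
  proof (cases "i = 0")
    case True
    have "c div N ^ Suc k < N" using "3.prems"
      by (simp add: div_less_iff_less_mult mult.commute)
    then show ?thesis using True by simp
  next
    case False
    then have "Gmat r N (Suc (Suc k)) i c = r ((c mod N ^ Suc k) div N ^ (k - (i - 1)) mod N)"
      using "3.IH" "3.prems" by simp
    also have "(c mod N ^ Suc k) div N ^ (k - (i - 1)) mod N = c div N ^ (k - (i - 1)) mod N"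
      using "3.prems" False by (intro mod_power_div_mod) auto
    finally show ?thesis using False by simp
  qed
qed auto

lemma card_filter_bij_betw: "bij_betw f A B \<Longrightarrow> card {a \<in> A. P (f a)} = card {b \<in> B. P b}"
  by (rule bij_betw_same_card[of f]) (auto simp: bij_betw_def inj_on_def)

lemma weight_enumerator_eq_sum:
  assumes "finite C" "\<And>c. c \<in> C \<Longrightarrow> hamming_wt c \<le> n"
  shows "weight_enumerator C n X Y = (\<Sum>c\<in>C. X ^ (n - hamming_wt c) * Y ^ hamming_wt c)"
proof -
  have "weight_enumerator C n X Y =
      (\<Sum>i\<le>n. \<Sum>c\<in>{c \<in> C. hamming_wt c = i}. X ^ (n - hamming_wt c) * Y ^ hamming_wt c)"
    unfolding weight_enumerator_def wt_count_def by (intro sum.cong refl) simp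
  also have "\<dots> = (\<Sum>c\<in>C. X ^ (n - hamming_wt c) * Y ^ hamming_wt c)"
    using assms by (intro sum.group) auto
  finally show ?thesis .
qed

lemma hamming_wt_le_length: "hamming_wt x \<le> length x"
  by (simp add: hamming_wt_def)

locale finite_chain_ring =
  fixes \<gamma> :: "'a::{comm_ring_1,finite}" and s :: nat and T :: "'a list"
  assumes chain: "\<And>I J :: 'a set. is_ideal I \<Longrightarrow> is_ideal J \<Longrightarrow> I \<subseteq> J \<or> J \<subseteq> I"
    and maximal: "maximal_ideal (pideal \<gamma>)"
    and gamma_power_s: "\<gamma> ^ s = 0"
    and gamma_power_nonzero: "\<forall>n<s. \<gamma> ^ n \<noteq> 0"
    and distinct_T: "distinct T"
    and T_representatives: "\<forall>r. \<exists>!t. t \<in> set T \<and> r - t \<in> pideal \<gamma>"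
    and T_0: "T ! 0 = 0"
begin

abbreviation q :: nat where "q \<equiv> length T"

lemma unit_if_not_in_maximal:
  assumes "x \<notin> pideal \<gamma>"
  obtains v where "x * v = 1"
proof -
  have "x \<in> pideal x" by (metis mem_pideal_iff mult_1)
  then have "pideal \<gamma> \<subseteq> pideal x"
    using chain[OF pideal_is_ideal pideal_is_ideal] assms by blast
  then have "pideal x = UNIV"
    using maximal pideal_is_ideal \<open>x \<in> pideal x\<close> assms unfolding maximal_ideal_def by blast
  then show ?thesis using that by (metis UNIV_I mem_pideal_iff mult.commute)
qed

lemma add_maximal_not_in_maximal: "x \<notin> pideal \<gamma> \<Longrightarrow> m \<in> pideal \<gamma> \<Longrightarrow> x + m \<notin> pideal \<gamma>"
  unfolding mem_pideal_iff by (metis add_diff_cancel_right' left_diff_distrib)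

lemma eq_if_diff_in_maximal: "t \<in> set T \<Longrightarrow> t' \<in> set T \<Longrightarrow> t - t' \<in> pideal \<gamma> \<Longrightarrow> t = t'"
  using T_representatives by (metis diff_self mem_pideal_iff mult_zero_left)

lemma zero_in_T: "0 \<in> set T"
proof -
  have "T \<noteq> []" using T_representatives by fastforce
  then show ?thesis using T_0 by (metis nth_mem length_greater_0_conv)
qed

lemma q_pos: "0 < q"
  using zero_in_T by (cases T) auto

section \<open>Digit expansions\<close>

definition digit_funs :: "(nat \<Rightarrow> 'a) set" where
  "digit_funs = {d. (\<forall>i<s. d i \<in> set T) \<and> (\<forall>i\<ge>s. d i = 0)}"

definition digit_value :: "(nat \<Rightarrow> 'a) \<Rightarrow> 'a" where
  "digit_value d = (\<Sum>i<s. d i * \<gamma> ^ i)"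

lemma gamma_power_eq_0: "s \<le> i \<Longrightarrow> \<gamma> ^ i = 0"
  using gamma_power_s by (metis le_add_diff_inverse mult_zero_left power_add)

lemma truncated_expansion_exists:
  "\<exists>d. (\<forall>i<n. d i \<in> set T) \<and> (\<forall>i\<ge>n. d i = 0) \<and> (\<exists>z. r = (\<Sum>i<n. d i * \<gamma> ^ i) + \<gamma> ^ n * z)"
proof (induction n arbitrary: r)
  case 0
  show ?case by (rule exI[of _ "\<lambda>_. 0"]) auto
next
  case (Suc n)
  obtain t y where t: "t \<in> set T" and y: "r - t = y * \<gamma>"
    using T_representatives unfolding mem_pideal_iff by blast
  obtain d z where d: "\<forall>i<n. d i \<in> set T" "\<forall>i\<ge>n. d i = 0"
    and z: "y = (\<Sum>i<n. d i * \<gamma> ^ i) + \<gamma> ^ n * z"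
    using Suc.IH[of y] by blast
  define d' where "d' i = (if i = 0 then t else d (i - 1))" for i
  have "(\<Sum>i<Suc n. d' i * \<gamma> ^ i) = t + (\<Sum>i<n. d i * \<gamma> ^ i) * \<gamma>"
    unfolding sum.lessThan_Suc_shift by (simp add: d'_def sum_distrib_left sum_distrib_right mult_ac)
  then have "r = (\<Sum>i<Suc n. d' i * \<gamma> ^ i) + \<gamma> ^ Suc n * z"
    using y z by (simp add: algebra_simps)
  moreover have "\<forall>i<Suc n. d' i \<in> set T" "\<forall>i\<ge>Suc n. d' i = 0"
    using t d by (auto simp: d'_def)
  ultimately show ?case by blast
qed

lemma digit_value_surj: "\<exists>d\<in>digit_funs. r = digit_value d"
  using truncated_expansion_exists[of s r]
  by (auto simp: digit_funs_def digit_value_def gamma_power_s)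

text \<open>If c 0 were nonzero, the sum would be a unit and so gamma^a = 0, contradicting a < s;
  then recurse with gamma^(a+1).\<close>
lemma unit_combination_eq_0:
  assumes "a + n \<le> s" "\<forall>i<n. c i = 0 \<or> c i \<notin> pideal \<gamma>"
    and "\<gamma> ^ a * (\<Sum>i<n. c i * \<gamma> ^ i) = 0"
  shows "\<forall>i<n. c i = 0"
  using assms
proof (induction n arbitrary: a c)
  case (Suc n)
  define S where "S = (\<Sum>i<n. c (Suc i) * \<gamma> ^ i)"
  have sum: "(\<Sum>i<Suc n. c i * \<gamma> ^ i) = c 0 + \<gamma> * S"
    unfolding sum.lessThan_Suc_shift S_def by (simp add: sum_distrib_left mult_ac)
  have c0: "c 0 = 0"
  proof (rule ccontr)
    assume "c 0 \<noteq> 0"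
    then have "c 0 + \<gamma> * S \<notin> pideal \<gamma>"
      using Suc.prems(2) add_maximal_not_in_maximal by (metis mem_pideal_iff mult.commute zero_less_Suc)
    then obtain v where v: "(c 0 + \<gamma> * S) * v = 1" by (rule unit_if_not_in_maximal)
    have "\<gamma> ^ a = \<gamma> ^ a * (c 0 + \<gamma> * S) * v" using v by (simp add: mult.assoc)
    also have "\<dots> = 0" using Suc.prems(3) sum by simp
    finally show False using gamma_power_nonzero Suc.prems(1) by auto
  qed
  have "\<forall>i<n. c (Suc i) = 0"
  proof (rule Suc.IH[of "Suc a" "\<lambda>i. c (Suc i)"])
    show "\<gamma> ^ Suc a * (\<Sum>i<n. c (Suc i) * \<gamma> ^ i) = 0"
      using Suc.prems(3) sum c0 by (simp add: mult_ac S_def)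
  qed (use Suc.prems in auto)
  then show ?case using c0 by (metis less_Suc_eq_0_disj)
qed simp

lemma inj_on_digit_value: "inj_on digit_value digit_funs"
proof
  fix d e assume d: "d \<in> digit_funs" and e: "e \<in> digit_funs" and eq: "digit_value d = digit_value e"
  have "\<forall>i<s. d i - e i = 0 \<or> d i - e i \<notin> pideal \<gamma>"
    using d e eq_if_diff_in_maximal unfolding digit_funs_def by auto
  moreover have "\<gamma> ^ 0 * (\<Sum>i<s. (d i - e i) * \<gamma> ^ i) = 0"
    using eq unfolding digit_value_def by (simp add: left_diff_distrib sum_subtractf)
  ultimately have "\<forall>i<s. d i - e i = 0" by (intro unit_combination_eq_0) auto
  then show "d = e"
  proof (intro ext)
    fix i show "d i = e i"
      using \<open>\<forall>i<s. d i - e i = 0\<close> d e unfolding digit_funs_def by (cases "i < s") auto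
  qed
qed

abbreviation digit :: "'a \<Rightarrow> nat \<Rightarrow> 'a" where
  "digit \<equiv> digits T \<gamma> s"

lemma digit_in_digit_funs: "digit r \<in> digit_funs"
  and digit_value_digit: "digit_value (digit r) = r"
proof -
  obtain d where d: "d \<in> digit_funs" "r = digit_value d"
    using digit_value_surj by blast
  have "\<exists>!d. d \<in> digit_funs \<and> r = digit_value d"
  proof (rule ex1I[of _ d])
    fix d' assume "d' \<in> digit_funs \<and> r = digit_value d'"
    then show "d' = d" using d inj_onD[OF inj_on_digit_value] by metis
  qed (use d in simp)
  then have "\<exists>!d. (\<forall>i<s. d i \<in> set T) \<and> (\<forall>i\<ge>s. d i = 0) \<and> r = (\<Sum>i<s. d i * \<gamma> ^ i)"
    by (simp add: digit_funs_def digit_value_def)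
  from theI'[OF this, folded digits_def]
  show "digit r \<in> digit_funs" "digit_value (digit r) = r"
    by (simp_all add: digit_funs_def digit_value_def)
qed

lemma inj_digit: "inj digit"
  by (rule inj_on_inverseI[of _ digit_value]) (rule digit_value_digit)

lemma digit_digit_value: "d \<in> digit_funs \<Longrightarrow> digit (digit_value d) = d"
  using inj_onD[OF inj_on_digit_value] digit_in_digit_funs digit_value_digit by metis

lemma digit_0: "digit 0 = (\<lambda>_. 0)"
proof -
  have "(\<lambda>_. 0) \<in> digit_funs" using zero_in_T by (simp add: digit_funs_def)
  from digit_digit_value[OF this] show ?thesis by (simp add: digit_value_def)
qed

definition shift_digits :: "nat \<Rightarrow> (nat \<Rightarrow> 'a) \<Rightarrow> nat \<Rightarrow> 'a" where
  "shift_digits j d i = (if j \<le> i \<and> i < s then d (i - j) else 0)"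

lemma shift_digits_in_digit_funs: "d \<in> digit_funs \<Longrightarrow> shift_digits j d \<in> digit_funs"
  using zero_in_T unfolding digit_funs_def shift_digits_def by auto

lemma digit_value_shift_digits: "digit_value (shift_digits j d) = \<gamma> ^ j * digit_value d"
proof -
  let ?f = "\<lambda>i. shift_digits j d i * \<gamma> ^ i"
  have "digit_value (shift_digits j d) = sum ?f {..<s + j}"
    unfolding digit_value_def by (rule sum.mono_neutral_left) (auto simp: shift_digits_def)
  also have "\<dots> = sum ?f {j..<s + j}"
    by (rule sum.mono_neutral_right) (auto simp: shift_digits_def)
  also have "\<dots> = (\<Sum>i<s. ?f (i + j))"
    using sum.shift_bounds_nat_ivl[of ?f 0 j s] by (simp add: atLeast0LessThan)
  also have "\<dots> = (\<Sum>i<s. \<gamma> ^ j * (d i * \<gamma> ^ i))"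
  proof (intro sum.cong refl)
    fix i show "?f (i + j) = \<gamma> ^ j * (d i * \<gamma> ^ i)"
      using gamma_power_eq_0[of "i + j"]
      by (cases "i + j < s") (auto simp: shift_digits_def power_add mult_ac)
  qed
  finally show ?thesis by (simp add: digit_value_def sum_distrib_left)
qed

lemma digit_mult_gamma_power: "digit (\<gamma> ^ j * y) = shift_digits j (digit y)"
  using digit_digit_value[OF shift_digits_in_digit_funs[OF digit_in_digit_funs]]
  by (simp add: digit_value_shift_digits digit_value_digit)

section \<open>The ideals generated by the powers of gamma\<close>

definition power_ideal :: "nat \<Rightarrow> 'a set" where
  "power_ideal j = range ((*) (\<gamma> ^ j))"

lemma mem_power_ideal_iff_digits: "r \<in> power_ideal j \<longleftrightarrow> (\<forall>i<j. digit r i = 0)"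
proof
  assume "r \<in> power_ideal j"
  then show "\<forall>i<j. digit r i = 0"
    by (auto simp: power_ideal_def digit_mult_gamma_power shift_digits_def)
next
  assume low: "\<forall>i<j. digit r i = 0"
  define d where "d i = (if i + j < s then digit r (i + j) else 0)" for i
  have "shift_digits j d = digit r"
  proof
    fix i show "shift_digits j d i = digit r i"
      using low digit_in_digit_funs[of r]
      by (cases "j \<le> i") (auto simp: shift_digits_def d_def digit_funs_def)
  qed
  then have "r = \<gamma> ^ j * digit_value d"
    by (metis digit_value_digit digit_value_shift_digits)
  then show "r \<in> power_ideal j" by (simp add: power_ideal_def)
qed

lemma card_power_ideal:
  assumes "j \<le> s"
  shows "card (power_ideal j) = q ^ (s - j)"
proof -
  define D where
    "D = {d. (\<forall>i<s. d i \<in> (if i < j then {0} else set T)) \<and> (\<forall>i\<ge>s. d i = 0)}"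
  have "D \<subseteq> digit_funs" using zero_in_T by (auto simp: D_def digit_funs_def)
  have "power_ideal j = digit_value ` D"
  proof (intro equalityI subsetI)
    fix r assume "r \<in> power_ideal j"
    then have "digit r \<in> D"
      using digit_in_digit_funs[of r] by (auto simp: mem_power_ideal_iff_digits D_def digit_funs_def)
    then show "r \<in> digit_value ` D" by (metis digit_value_digit image_eqI)
  next
    fix r assume "r \<in> digit_value ` D"
    then obtain d where "d \<in> D" "r = digit_value d" by blast
    with \<open>D \<subseteq> digit_funs\<close> have "digit r = d" "d \<in> D" by (auto simp: digit_digit_value)
    show "r \<in> power_ideal j"
      unfolding mem_power_ideal_iff_digits
    proof (intro allI impI)
      fix i assume "i < j"
      with assms have "i < s" by simp
      with \<open>i < j\<close> \<open>digit r = d\<close> \<open>d \<in> D\<close> show "digit r i = 0" by (auto simp: D_def)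
    qed
  qed
  moreover have "inj_on digit_value D"
    using inj_on_digit_value \<open>D \<subseteq> digit_funs\<close> by (rule inj_on_subset)
  ultimately have "card (power_ideal j) = (\<Prod>i<s. card (if i < j then {0::'a} else set T))"
    by (simp add: card_image D_def card_funs_fixed_outside)
  also have "\<dots> = (\<Prod>i\<in>{j..<s}. q)"
    using assms distinct_card[OF distinct_T]
    by (intro prod.mono_neutral_cong_right) auto
  finally show ?thesis by simp
qed

lemma zero_in_power_ideal: "0 \<in> power_ideal j"
  by (metis power_ideal_def mult_zero_right rangeI)

lemma power_ideal_0: "power_ideal 0 = UNIV"
  by (simp add: power_ideal_def)

lemma card_UNIV: "card (UNIV :: 'a set) = q ^ s"
  using card_power_ideal[of 0] by (simp add: power_ideal_0)

lemma power_ideal_s: "power_ideal s = {0}"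
  by (auto simp: power_ideal_def gamma_power_s)

lemma power_ideal_antimono:
  assumes "j \<le> j'"
  shows "power_ideal j' \<subseteq> power_ideal j"
proof
  fix r assume "r \<in> power_ideal j'"
  then obtain y where "r = \<gamma> ^ j' * y" by (auto simp: power_ideal_def)
  also have "\<dots> = \<gamma> ^ j * (\<gamma> ^ (j' - j) * y)"
    using assms by (simp flip: mult.assoc power_add)
  finally show "r \<in> power_ideal j" by (simp add: power_ideal_def)
qed

lemma mult_gamma_power_eq_0_iff:
  assumes "j \<le> s"
  shows "\<gamma> ^ j * y = 0 \<longleftrightarrow> y \<in> power_ideal (s - j)"
proof -
  have "\<gamma> ^ j * y = 0 \<longleftrightarrow> digit (\<gamma> ^ j * y) = digit 0"
    using inj_digit by (simp add: inj_eq)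
  also have "\<dots> \<longleftrightarrow> shift_digits j (digit y) = (\<lambda>_. 0)"
    by (simp add: digit_mult_gamma_power digit_0)
  also have "\<dots> \<longleftrightarrow> (\<forall>i<s - j. digit y i = 0)"
  proof
    assume shifted: "shift_digits j (digit y) = (\<lambda>_. 0)"
    show "\<forall>i<s - j. digit y i = 0"
    proof (intro allI impI)
      fix i assume "i < s - j"
      then show "digit y i = 0"
        using fun_cong[OF shifted, of "i + j"] by (simp add: shift_digits_def less_diff_conv)
    qed
  qed (auto simp: shift_digits_def fun_eq_iff)
  finally show ?thesis by (simp add: mem_power_ideal_iff_digits)
qed

lemma power_ideal_unit_factor:
  assumes "r \<in> power_ideal j" "r \<notin> power_ideal (Suc j)"
  obtains u v where "r = \<gamma> ^ j * u" "u * v = 1"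
proof -
  obtain u where u: "r = \<gamma> ^ j * u" using assms(1) by (auto simp: power_ideal_def)
  have "u \<notin> pideal \<gamma>"
  proof
    assume "u \<in> pideal \<gamma>"
    then obtain z where "u = z * \<gamma>" by (auto simp: mem_pideal_iff)
    then have "r = \<gamma> ^ Suc j * z" using u by (simp add: mult_ac)
    then show False using assms(2) by (simp add: power_ideal_def)
  qed
  then show ?thesis using that u by (metis unit_if_not_in_maximal)
qed

section \<open>The order on R and its enumeration\<close>

lemma nth_tidx: "t \<in> set T \<Longrightarrow> T ! tidx T t = t"
proof -
  assume "t \<in> set T"
  then obtain n where n: "n < q" "T ! n = t" by (auto simp: in_set_conv_nth)
  have "\<exists>!n. n < q \<and> T ! n = t"
  proof (rule ex1I[of _ n])
    fix m assume "m < q \<and> T ! m = t"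
    then show "m = n" using n nth_eq_iff_index_eq[OF distinct_T, of m n] by simp
  qed (use n in simp)
  then have "tidx T t < q \<and> T ! tidx T t = t" unfolding tidx_def by (rule theI')
  then show ?thesis by simp
qed

lemma inj_on_tidx: "inj_on (tidx T) (set T)"
  by (rule inj_on_inverseI[of _ "(!) T"]) (rule nth_tidx)

abbreviation less_R :: "'a \<Rightarrow> 'a \<Rightarrow> bool" where
  "less_R \<equiv> rless T \<gamma> s"

lemma less_R_irrefl: "\<not> less_R x x"
  by (simp add: rless_def)

lemma less_R_trans:
  assumes "less_R x y" "less_R y z"
  shows "less_R x z"
proof -
  obtain i where i: "i < s" "tidx T (digit x i) < tidx T (digit y i)"
      "\<forall>l. i < l \<and> l < s \<longrightarrow> digit x l = digit y l"
    using assms(1) unfolding rless_def by blast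
  obtain i' where i': "i' < s" "tidx T (digit y i') < tidx T (digit z i')"
      "\<forall>l. i' < l \<and> l < s \<longrightarrow> digit y l = digit z l"
    using assms(2) unfolding rless_def by blast
  consider "i = i'" | "i < i'" | "i' < i" by linarith
  then show ?thesis
  proof cases
    case 1
    then show ?thesis using i i' unfolding rless_def by (metis less_trans)
  next
    case 2
    then have "digit x i' = digit y i'" using i i' by blast
    then show ?thesis using i i' 2 unfolding rless_def by (metis less_trans)
  next
    case 3
    then have "digit y i = digit z i" using i i' by blast
    then show ?thesis using i i' 3 unfolding rless_def by (metis less_trans)
  qed
qed

lemma less_R_total:
  assumes "x \<noteq> y"
  shows "less_R x y \<or> less_R y x"
proof -
  define D where "D = {i. i < s \<and> digit x i \<noteq> digit y i}"
  have "digit x \<noteq> digit y" using assms inj_digit by (auto dest: injD)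
  then obtain i where "digit x i \<noteq> digit y i" by auto
  moreover have "i < s"
  proof (rule ccontr)
    assume "\<not> i < s"
    then show False
      using calculation digit_in_digit_funs[of x] digit_in_digit_funs[of y]
      by (simp add: digit_funs_def)
  qed
  ultimately have "D \<noteq> {}" by (auto simp: D_def)
  define m where "m = Max D"
  have "finite D" by (simp add: D_def)
  then have m: "m < s" "digit x m \<noteq> digit y m"
    using Max_in[OF _ \<open>D \<noteq> {}\<close>] by (auto simp: m_def D_def)
  have above: "digit x l = digit y l" if "m < l" "l < s" for l
  proof -
    have "l \<notin> D" using Max_ge[OF \<open>finite D\<close>, of l] that by (auto simp: m_def)
    then show ?thesis using that by (simp add: D_def)
  qed
  have "digit x m \<in> set T" "digit y m \<in> set T"
    using m digit_in_digit_funs[of x] digit_in_digit_funs[of y] by (auto simp: digit_funs_def)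
  then have "tidx T (digit x m) \<noteq> tidx T (digit y m)"
    using m(2) inj_on_tidx by (auto dest: inj_onD)
  then consider "tidx T (digit x m) < tidx T (digit y m)" | "tidx T (digit y m) < tidx T (digit x m)"
    by linarith
  then show ?thesis
  proof cases
    case 1
    then have "less_R x y" using m(1) above unfolding rless_def by blast
    then show ?thesis ..
  next
    case 2
    then have "less_R y x" using m(1) above[symmetric] unfolding rless_def by blast
    then show ?thesis ..
  qed
qed

abbreviation N :: nat where
  "N \<equiv> q ^ s"

lemma bij_betw_rho: "bij_betw (rho T \<gamma> s) {..<N} UNIV"
proof -
  let ?rank = "\<lambda>x. card {y. less_R y x}"
  have rank: "bij_betw ?rank UNIV {..<N}"
    using bij_betw_rank[of less_R, OF less_R_irrefl less_R_trans less_R_total] card_UNIV by simp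
  have "rho T \<gamma> s j = inv_into UNIV ?rank j" if "j < N" for j
    unfolding rho_def
  proof (rule the_equality)
    have "j \<in> range ?rank" using rank that by (auto simp: bij_betw_def)
    then show "?rank (inv_into UNIV ?rank j) = j" by (rule f_inv_into_f)
  next
    fix x assume "?rank x = j"
    moreover have "inv_into UNIV ?rank (?rank x) = x"
      using bij_betw_imp_inj_on[OF rank] by (rule inv_into_f_f) simp
    ultimately show "x = inv_into UNIV ?rank j" by simp
  qed
  then show ?thesis
    using bij_betw_cong[of "{..<N}" "rho T \<gamma> s" "inv_into UNIV ?rank"] bij_betw_inv_into[OF rank]
    by simp
qed

section \<open>Codewords of the simplex alpha code\<close>

abbreviation tuples :: "nat \<Rightarrow> (nat \<Rightarrow> 'a) set" where
  "tuples k \<equiv> PiE {..<k} (\<lambda>_. UNIV)"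

lemma card_tuples: "card (tuples k) = N ^ k"
  by (simp add: card_PiE card_UNIV)

definition column :: "nat \<Rightarrow> nat \<Rightarrow> nat \<Rightarrow> 'a" where
  "column k c = (\<lambda>i\<in>{..<k}. rho T \<gamma> s (c div N ^ (k - 1 - i) mod N))"

lemma Gmat_eq_column: "i < k \<Longrightarrow> c < N ^ k \<Longrightarrow> Gmat (rho T \<gamma> s) N k i c = column k c i"
  using Gmat_eq_base_digit[of N i k c] q_pos by (simp add: column_def)

lemma bij_betw_column: "bij_betw (column k) {..<N ^ k} (tuples k)"
proof -
  have "inj_on (column k) {..<N ^ k}"
  proof
    fix c c' assume c: "c \<in> {..<N ^ k}" "c' \<in> {..<N ^ k}" and eq: "column k c = column k c'"
    have "c div N ^ m mod N = c' div N ^ m mod N" if "m < k" for m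
    proof -
      have "column k c (k - 1 - m) = column k c' (k - 1 - m)" using eq by simp
      then have "rho T \<gamma> s (c div N ^ m mod N) = rho T \<gamma> s (c' div N ^ m mod N)"
        using that by (simp add: column_def)
      then show ?thesis
        using bij_betw_imp_inj_on[OF bij_betw_rho] q_pos by (auto dest: inj_onD)
    qed
    then show "c = c'" using base_digits_inj[of N c k c'] q_pos c by simp
  qed
  moreover have "column k ` {..<N ^ k} \<subseteq> tuples k"
    by (simp add: column_def image_subset_iff)
  ultimately show ?thesis
    by (simp add: bij_betw_def card_image card_tuples card_subset_eq finite_PiE)
qed

definition codeword :: "nat \<Rightarrow> (nat \<Rightarrow> 'a) \<Rightarrow> 'a list" where
  "codeword k a = map (\<lambda>c. \<Sum>i<k. a i * Gmat (rho T \<gamma> s) N k i c) [0..<N ^ k]"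

lemma length_codeword: "length (codeword k a) = q ^ (s * k)"
  by (simp add: codeword_def power_mult)

lemma nth_codeword: "c < N ^ k \<Longrightarrow> codeword k a ! c = (\<Sum>i<k. a i * column k c i)"
  by (simp add: codeword_def Gmat_eq_column)

lemma simplex_alpha_code_eq_image: "simplex_alpha_code T \<gamma> s k = codeword k ` tuples k"
proof -
  have "range (codeword k) = codeword k ` tuples k"
  proof (intro equalityI subsetI)
    fix w assume "w \<in> range (codeword k)"
    then obtain a where "w = codeword k a" by blast
    also have "\<dots> = codeword k (restrict a {..<k})"
      unfolding codeword_def by (intro map_cong refl sum.cong) auto
    finally show "w \<in> codeword k ` tuples k" by simp
  qed auto
  then show ?thesis
    by (simp add: simplex_alpha_code_def row_code_def codeword_def full_SetCompr_eq power_mult)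
qed

text \<open>Evaluating at the column that is the i-th unit vector recovers a i.\<close>
lemma inj_on_codeword: "inj_on (codeword k) (tuples k)"
proof
  fix a b assume a: "a \<in> tuples k" and b: "b \<in> tuples k" and eq: "codeword k a = codeword k b"
  show "a = b"
  proof (rule PiE_ext[OF a b])
    fix l assume l: "l \<in> {..<k}"
    define e where "e = (\<lambda>i\<in>{..<k}. if i = l then 1 else (0::'a))"
    have "e \<in> tuples k" by (simp add: e_def)
    then have "e \<in> column k ` {..<N ^ k}"
      using bij_betw_column[of k] by (simp add: bij_betw_def)
    then obtain c where c: "c < N ^ k" "column k c = e" by auto
    have entry: "codeword k f ! c = f l" for f
    proof -
      have "codeword k f ! c = (\<Sum>i<k. f i * e i)" using nth_codeword[OF c(1)] c(2) by simp
      also have "\<dots> = (\<Sum>i<k. if i = l then f i else 0)"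
        by (intro sum.cong) (simp_all add: e_def)
      also have "\<dots> = f l" using l by simp
      finally show ?thesis .
    qed
    from entry[of a] entry[of b] eq show "a l = b l" by simp
  qed
qed

lemma hamming_wt_codeword:
  "hamming_wt (codeword k a) = card {x \<in> tuples k. (\<Sum>i<k. a i * x i) \<noteq> 0}"
proof -
  have "hamming_wt (codeword k a) = card {c \<in> {..<N ^ k}. (\<Sum>i<k. a i * column k c i) \<noteq> 0}"
    unfolding hamming_wt_def length_filter_conv_card
    by (intro arg_cong[where f = card]) (auto simp: nth_codeword length_codeword power_mult)
  also have "\<dots> = card {x \<in> tuples k. (\<Sum>i<k. a i * x i) \<noteq> 0}"
    by (rule card_filter_bij_betw[OF bij_betw_column])
  finally show ?thesis .
qed

section \<open>Weights of codewords\<close>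

text \<open>Fixing every coordinate but i0 leaves an equation gamma^j (u x_i0 + S) = 0 with u a
  unit, whose solutions form a translate of the annihilator of gamma^j.\<close>
lemma card_zeros_linear_form:
  assumes j: "j < s" and a: "\<forall>i<k. a i \<in> power_ideal j"
    and i0: "i0 < k" "a i0 \<notin> power_ideal (Suc j)"
  shows "card {x \<in> tuples k. (\<Sum>i<k. a i * x i) = 0} = N ^ (k - 1) * q ^ j"
proof -
  obtain u v where u: "a i0 = \<gamma> ^ j * u" "u * v = 1"
    using power_ideal_unit_factor a i0 by metis
  have "\<forall>i. \<exists>y. i < k \<longrightarrow> a i = \<gamma> ^ j * y" using a by (auto simp: power_ideal_def)
  then obtain b where b: "\<forall>i. i < k \<longrightarrow> a i = \<gamma> ^ j * b i" by metis
  let ?D = "{..<k} - {i0}"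
  have form: "(\<Sum>i<k. a i * (g(i0 := t)) i) = \<gamma> ^ j * (u * t + (\<Sum>i\<in>?D. b i * g i))" for g t
  proof -
    have "(\<Sum>i<k. a i * (g(i0 := t)) i) = a i0 * t + (\<Sum>i\<in>?D. a i * g i)"
      using i0 by (simp add: sum.remove[of "{..<k}" i0])
    also have "(\<Sum>i\<in>?D. a i * g i) = \<gamma> ^ j * (\<Sum>i\<in>?D. b i * g i)"
      using b by (simp add: sum_distrib_left mult.assoc)
    finally show ?thesis using u by (simp add: distrib_left mult.assoc)
  qed
  have "card {x \<in> tuples k. (\<Sum>i<k. a i * x i) = 0} = card (UNIV :: 'a set) ^ (card {..<k} - 1) * q ^ j"
  proof (rule card_PiE_UNIV_filter)
    fix g
    have "card {t. (\<Sum>i<k. a i * (g(i0 := t)) i) = 0}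
        = card {t. u * t + (\<Sum>i\<in>?D. b i * g i) \<in> power_ideal (s - j)}"
      unfolding form using j by (simp add: mult_gamma_power_eq_0_iff)
    also have "\<dots> = q ^ j"
      using j u(2) by (simp add: card_unit_affine_preimage card_power_ideal)
    finally show "card {t. (\<Sum>i<k. a i * (g(i0 := t)) i) = 0} = q ^ j" .
  qed (use i0 in auto)
  then show ?thesis by (simp add: card_UNIV)
qed

definition level :: "nat \<Rightarrow> nat \<Rightarrow> (nat \<Rightarrow> 'a) set" where
  "level k j = PiE {..<k} (\<lambda>_. power_ideal j) - PiE {..<k} (\<lambda>_. power_ideal (Suc j))"

lemma hamming_wt_codeword_level:
  assumes "j < s" "a \<in> level k j"
  shows "hamming_wt (codeword k a) = q ^ (s * k) - q ^ (s * (k - 1) + j)"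
proof -
  let ?Z = "{x \<in> tuples k. (\<Sum>i<k. a i * x i) = 0}"
  obtain i0 where "i0 < k" "a i0 \<notin> power_ideal (Suc j)" "\<forall>i<k. a i \<in> power_ideal j"
    using assms(2) by (auto simp: level_def PiE_iff)
  then have "card ?Z = N ^ (k - 1) * q ^ j"
    using assms(1) by (intro card_zeros_linear_form) auto
  moreover have "{x \<in> tuples k. (\<Sum>i<k. a i * x i) \<noteq> 0} = tuples k - ?Z" by auto
  ultimately have "hamming_wt (codeword k a) = N ^ k - N ^ (k - 1) * q ^ j"
    by (simp add: hamming_wt_codeword card_Diff_subset finite_PiE card_tuples)
  then show ?thesis by (simp add: power_mult power_add)
qed

lemma card_level:
  assumes "j < s"
  shows "card (level k j) = q ^ (k * (s - j)) - q ^ (k * (s - j - 1))"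
proof -
  have "PiE {..<k} (\<lambda>_. power_ideal (Suc j)) \<subseteq> PiE {..<k} (\<lambda>_. power_ideal j)"
    using power_ideal_antimono[of j "Suc j"] by (auto simp: PiE_iff)
  then have "card (level k j) = (q ^ (s - j)) ^ k - (q ^ (s - Suc j)) ^ k"
    using assms by (simp add: level_def card_Diff_subset finite_PiE card_PiE card_power_ideal)
  then show ?thesis by (simp add: power_mult[symmetric] mult.commute)
qed

lemma tuples_eq_levels: "tuples k = insert (\<lambda>i\<in>{..<k}. 0) (\<Union>j<s. level k j)"
proof (intro equalityI subsetI)
  fix a assume a: "a \<in> tuples k"
  show "a \<in> insert (\<lambda>i\<in>{..<k}. 0) (\<Union>j<s. level k j)"
  proof (cases "\<forall>i<k. a i = 0")
    case False
    let ?outside = "\<lambda>j. \<not> (\<forall>i<k. a i \<in> power_ideal j)"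
    have "?outside s" "\<not> ?outside 0" using False by (auto simp: power_ideal_s power_ideal_0)
    then obtain j where "j < s" "\<not> ?outside j" "?outside (Suc j)"
      using ex_least_nat_less[of ?outside s] by blast
    then have "a \<in> level k j" using a by (auto simp: level_def PiE_iff)
    then show ?thesis using \<open>j < s\<close> by blast
  qed (use a in \<open>auto simp: PiE_iff extensional_def fun_eq_iff\<close>)
qed (auto simp: level_def PiE_iff)

lemma sum_tuples_by_level:
  "(\<Sum>a\<in>tuples k. h a) = h (\<lambda>i\<in>{..<k}. 0) + (\<Sum>j<s. \<Sum>a\<in>level k j. h a)"
proof -
  have finite: "finite (level k j)" for j by (simp add: level_def finite_PiE)
  have "(\<lambda>i\<in>{..<k}. 0) \<notin> level k j" for j
    by (simp add: level_def Pi_iff zero_in_power_ideal)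
  moreover have "level k j \<inter> level k j' = {}" if "j \<noteq> j'" for j j'
  proof -
    have "level k j \<inter> level k j' = {}" if "j < j'" for j j'
      using that power_ideal_antimono[of "Suc j" j'] by (auto simp: level_def PiE_iff)
    then show ?thesis using \<open>j \<noteq> j'\<close> by (metis inf_commute nat_neq_iff)
  qed
  ultimately show ?thesis
    by (simp add: tuples_eq_levels finite sum.UNION_disjoint)
qed

lemma weight_enumerator_simplex_alpha_code:
  "weight_enumerator (simplex_alpha_code T \<gamma> s k) (q ^ (s * k)) X Y =
     (\<Sum>j<s. real (q ^ (k * (s - j)) - q ^ (k * (s - j - 1)))
              * X ^ (q ^ (s * k) - (q ^ (s * k) - q ^ (s * (k - 1) + j)))
              * Y ^ (q ^ (s * k) - q ^ (s * (k - 1) + j)))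
     + X ^ (q ^ (s * k))"
proof -
  let ?monomial = "\<lambda>w. X ^ (q ^ (s * k) - w) * Y ^ w"
  let ?w = "\<lambda>j. q ^ (s * k) - q ^ (s * (k - 1) + j)"
  have "hamming_wt c \<le> q ^ (s * k)" if c: "c \<in> codeword k ` tuples k" for c
  proof -
    obtain a where "c = codeword k a" using c by blast
    then show ?thesis using hamming_wt_le_length[of c] by (simp add: length_codeword)
  qed
  then have "weight_enumerator (simplex_alpha_code T \<gamma> s k) (q ^ (s * k)) X Y
      = (\<Sum>c\<in>codeword k ` tuples k. ?monomial (hamming_wt c))"
    unfolding simplex_alpha_code_eq_image by (intro weight_enumerator_eq_sum) (simp_all add: finite_PiE)
  also have "\<dots> = (\<Sum>a\<in>tuples k. ?monomial (hamming_wt (codeword k a)))"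
    using inj_on_codeword by (simp add: sum.reindex)
  also have "\<dots> = ?monomial 0 + (\<Sum>j<s. \<Sum>a\<in>level k j. ?monomial (?w j))"
  proof -
    have "hamming_wt (codeword k (\<lambda>i\<in>{..<k}. 0)) = 0" by (simp add: hamming_wt_codeword)
    moreover have "(\<Sum>a\<in>level k j. ?monomial (hamming_wt (codeword k a)))
        = (\<Sum>a\<in>level k j. ?monomial (?w j))" if "j < s" for j
      using that by (intro sum.cong) (simp_all add: hamming_wt_codeword_level)
    ultimately show ?thesis by (simp add: sum_tuples_by_level)
  qed
  also have "(\<Sum>j<s. \<Sum>a\<in>level k j. ?monomial (?w j))
      = (\<Sum>j<s. real (q ^ (k * (s - j)) - q ^ (k * (s - j - 1))) * X ^ (q ^ (s * k) - ?w j) * Y ^ ?w j)"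
    by (intro sum.cong refl) (simp add: card_level mult.assoc)
  finally show ?thesis by (simp add: add.commute)
qed

end

theorem theorem3p13:
  fixes \<gamma> :: "'a::{comm_ring_1,finite}" and s k :: nat and T :: "'a list"
  assumes chain: "\<And>I J :: 'a set. is_ideal I \<Longrightarrow> is_ideal J \<Longrightarrow> I \<subseteq> J \<or> J \<subseteq> I"
    and maxid: "maximal_ideal (pideal \<gamma>)"
    and nilp: "\<gamma> ^ s = 0" "\<forall>n<s. \<gamma> ^ n \<noteq> 0"
    and T_dist: "distinct T"
    and T_reps: "\<forall>r::'a. \<exists>!t. t \<in> set T \<and> r - t \<in> pideal \<gamma>"
    and T0: "T ! 0 = 0" and T1: "T ! 1 = 1"
    and k: "k \<ge> 1"
  shows "\<forall>X Y :: real.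
     weight_enumerator (simplex_alpha_code T \<gamma> s k) ((length T) ^ (s * k)) X Y =
       (\<Sum>j<s. real ((length T) ^ (k * (s - j)) - (length T) ^ (k * (s - j - 1)))
                * X ^ ((length T) ^ (s * k) - ((length T) ^ (s * k) - (length T) ^ (s * (k - 1) + j)))
                * Y ^ ((length T) ^ (s * k) - (length T) ^ (s * (k - 1) + j)))
       + X ^ ((length T) ^ (s * k))"
proof -
  interpret finite_chain_ring \<gamma> s T
    using chain maxid nilp T_dist T_reps T0 by unfold_locales auto
  show ?thesis using weight_enumerator_simplex_alpha_code by blast
qed

end
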